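(* Let $G$ be a compact group, $H$ a normal subgroup, $K=G/H$ with quotient map $g\mapsto[g]$. Let $(l_n)_{n\in\mathbb{N}}$ be continuous length functions on $G$ converging uniformly on $G$ to $\widetilde{l_\infty}$ with $\widetilde{l_\infty}(g)=0$ for $g\in H$ and $\widetilde{l_\infty}(g)>0$ for $g\notin H$, and let $l_\infty$ be the function on $K$ defined by $l_\infty([g])=\widetilde{l_\infty}(g)$. For $n\in\mathbb{N}$ define $l_n^K([g])=\inf\{l_n(g'):g'\in G,\ [g']=[g]\}$. Then each $l_n^K$ is continuous on $K$, and $(l_n^K)_{n\in\mathbb{N}}$ converges uniformly on $K$ to $l_\infty$.
   Context: A length function on a group with unit $e$: $l\ge0$, $l(g)=0$ iff $g=e$, $l(g^{-1})=l(g)$, $l(gh)\le l(g)+l(h)$. *)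

theory Defs
  imports "HOL-Analysis.Analysis"
begin

text \<open>Groups are written additively (class group_add, not necessarily commutative);
  the unit is 0.\<close>

definition length_fun :: "('a::group_add \<Rightarrow> real) \<Rightarrow> bool" where
  "length_fun l \<longleftrightarrow> (\<forall>g. l g \<ge> 0) \<and> (\<forall>g. l g = 0 \<longleftrightarrow> g = 0) \<and>
     (\<forall>g. l (- g) = l g) \<and> (\<forall>g h. l (g + h) \<le> l g + l h)"

definition normal_subgroup :: "'a::group_add set \<Rightarrow> bool" where
  "normal_subgroup H \<longleftrightarrow> 0 \<in> H \<and> (\<forall>x\<in>H. \<forall>y\<in>H. x + y \<in> H) \<and> (\<forall>x\<in>H. - x \<in> H) \<and>
     (\<forall>g. \<forall>h\<in>H. g + h - g \<in> H)"

text \<open>The quotient map g \<mapsto> [g] = gH and the quotient K = G/H as the set of cosets.\<close>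

definition qcoset :: "'a::group_add set \<Rightarrow> 'a \<Rightarrow> 'a set" where
  "qcoset H g = (\<lambda>h. g + h) ` H"

definition qspace :: "'a::group_add set \<Rightarrow> 'a set set" where
  "qspace H = range (qcoset H)"

definition qtop :: "'a::{group_add,topological_space} set \<Rightarrow> 'a set topology" where
  "qtop H = topology (\<lambda>U. U \<subseteq> qspace H \<and> open (qcoset H -` U))"

end

theory Submission
  imports Defs
begin

text \<open>Subadditivity and symmetry of \<open>l\<close> give
  \<open>\<bar>l\<^sup>K[g'] - l\<^sup>K[g]\<bar> \<le> l (g' - g)\<close>, so continuity of \<open>l\<close> at \<open>0\<close> makes \<open>g \<mapsto> l\<^sup>K[g]\<close>
  continuous, which is continuity of \<open>l\<^sup>K\<close> for the quotient topology. Taking the infimum over a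
  fibre moves values by at most the uniform distance of the functions, and the limit
  \<open>l\<^sub>\<infinity>\<close> is constant on fibres, so uniform convergence passes to the quotient.\<close>

lemma qcoset_add: "qcoset H (a + b) = (\<lambda>x. a + x) ` qcoset H b"
  unfolding qcoset_def by (auto simp: image_image add.assoc)

lemma openin_qtop: "openin (qtop H) U \<longleftrightarrow> U \<subseteq> qspace H \<and> open (qcoset H -` U)"
proof -
  have "istopology (\<lambda>U. U \<subseteq> qspace H \<and> open (qcoset H -` U))"
    unfolding istopology_def by (auto simp: vimage_Union open_Int intro!: open_Union)
  then show ?thesis unfolding qtop_def by simp
qed

lemma topspace_qtop: "topspace (qtop H) = qspace H"
proof -
  have "qcoset H -` qspace H = UNIV" unfolding qspace_def by auto
  then have "openin (qtop H) (qspace H)" unfolding openin_qtop by auto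
  then show ?thesis unfolding topspace_def using openin_qtop by auto
qed

lemma continuous_map_qtopI:
  fixes f :: "'a::{group_add,topological_space} set \<Rightarrow> 'b::topological_space"
  assumes "continuous_on UNIV (\<lambda>g. f (qcoset H g))"
  shows "continuous_map (qtop H) euclidean f"
  unfolding continuous_map_def topspace_qtop
proof (intro conjI allI impI)
  fix U :: "'b set" assume "openin euclidean U"
  moreover have "qcoset H -` {C \<in> qspace H. f C \<in> U} = (\<lambda>g. f (qcoset H g)) -` U"
    unfolding qspace_def by auto
  ultimately show "openin (qtop H) {C \<in> qspace H. f C \<in> U}"
    using assms by (simp add: openin_qtop continuous_on_open_vimage)
qed simp

lemma dist_INF_le:
  fixes f g :: "'a \<Rightarrow> real"
  assumes "S \<noteq> {}" "bdd_below (f ` S)" "bdd_below (g ` S)"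
    and close: "\<And>x. x \<in> S \<Longrightarrow> dist (f x) (g x) \<le> e"
  shows "dist (INF x \<in> S. f x) (INF x \<in> S. g x) \<le> e"
proof -
  have "(INF x \<in> S. f x) - e \<le> g x" "(INF x \<in> S. g x) - e \<le> f x" if "x \<in> S" for x
  proof -
    have "(INF x \<in> S. f x) \<le> f x" "(INF x \<in> S. g x) \<le> g x"
      using cINF_lower[OF assms(2) that] cINF_lower[OF assms(3) that] .
    moreover have "\<bar>f x - g x\<bar> \<le> e" using close[OF that] by (simp add: dist_real_def)
    ultimately show "(INF x \<in> S. f x) - e \<le> g x" "(INF x \<in> S. g x) - e \<le> f x"
      by linarith+
  qed
  then have "(INF x \<in> S. f x) - e \<le> (INF x \<in> S. g x)" "(INF x \<in> S. g x) - e \<le> (INF x \<in> S. f x)"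
    using cINF_greatest[OF \<open>S \<noteq> {}\<close>] by metis+
  then show ?thesis unfolding dist_real_def by linarith
qed

lemma length_fun_bdd_below: "length_fun l \<Longrightarrow> bdd_below (range l)"
  unfolding length_fun_def by (auto intro: bdd_belowI2)

definition quotient_inf :: "('a::group_add \<Rightarrow> real) \<Rightarrow> 'a set \<Rightarrow> 'a set \<Rightarrow> real" where
  "quotient_inf l H C = (INF g \<in> qcoset H -` {C}. l g)"

lemma quotient_inf_qcoset:
  "quotient_inf l H (qcoset H g) = Inf {l g' | g'. qcoset H g' = qcoset H g}"
  unfolding quotient_inf_def by (rule arg_cong[where f = Inf]) blast

lemma quotient_inf_le:
  assumes "bdd_below (range l)"
  shows "quotient_inf l H (qcoset H g) \<le> l g"
  unfolding quotient_inf_def by (intro cINF_lower bdd_below_mono[OF assms]) auto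

lemma quotient_inf_eq_if_constant:
  assumes "\<And>g'. qcoset H g' = qcoset H g \<Longrightarrow> l g' = l g"
  shows "quotient_inf l H (qcoset H g) = l g"
proof -
  have "l ` (qcoset H -` {qcoset H g}) = {l g}" using assms by blast
  then show ?thesis unfolding quotient_inf_def by simp
qed

lemma quotient_inf_translate_le:
  assumes l: "length_fun l"
  shows "quotient_inf l H (qcoset H g') \<le> l (g' - g) + quotient_inf l H (qcoset H g)"
proof -
  have "quotient_inf l H (qcoset H g') - l (g' - g) \<le> l x" if "qcoset H x = qcoset H g" for x
  proof -
    have "qcoset H (g' - g + x) = qcoset H g'"
      using that by (simp add: qcoset_add[of H "g' - g"] qcoset_add[of H "g' - g" g, symmetric])
    then have "quotient_inf l H (qcoset H g') \<le> l (g' - g + x)"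
      using quotient_inf_le[OF length_fun_bdd_below[OF l]] by metis
    also have "\<dots> \<le> l (g' - g) + l x" using l unfolding length_fun_def by blast
    finally show ?thesis by simp
  qed
  then have "quotient_inf l H (qcoset H g') - l (g' - g) \<le> quotient_inf l H (qcoset H g)"
    unfolding quotient_inf_def by (intro cINF_greatest) auto
  then show ?thesis by simp
qed

lemma dist_quotient_inf_le:
  assumes l: "length_fun l"
  shows "dist (quotient_inf l H (qcoset H g')) (quotient_inf l H (qcoset H g)) \<le> l (g' - g)"
proof -
  have "l (g - g') = l (g' - g)"
    using l unfolding length_fun_def by (metis minus_diff_eq)
  then show ?thesis
    using quotient_inf_translate_le[OF l, of H g' g] quotient_inf_translate_le[OF l, of H g g']
    unfolding dist_real_def by linarith
qed

lemma continuous_quotient_inf: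
  fixes l :: "'a::{topological_group_add, t2_space} \<Rightarrow> real"
  assumes l: "length_fun l" and cont: "isCont l 0"
  shows "continuous_on UNIV (\<lambda>g. quotient_inf l H (qcoset H g))"
proof (intro continuous_at_imp_continuous_on ballI)
  let ?F = "\<lambda>g. quotient_inf l H (qcoset H g)"
  fix g :: 'a
  have "((\<lambda>g'. g' - g) \<longlongrightarrow> 0) (at g)"
    using tendsto_diff[OF tendsto_ident_at[of g UNIV] tendsto_const[of g]] by simp
  then have "((\<lambda>g'. l (g' - g)) \<longlongrightarrow> l 0) (at g)"
    by (rule isCont_tendsto_compose[OF cont])
  moreover have "l 0 = 0" using l unfolding length_fun_def by blast
  ultimately have "((\<lambda>g'. l (g' - g)) \<longlongrightarrow> 0) (at g)" by simp
  moreover have "\<forall>\<^sub>F g' in at g. norm (dist (?F g') (?F g)) \<le> l (g' - g)"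
    by (simp add: dist_quotient_inf_le[OF l])
  ultimately have "((\<lambda>g'. dist (?F g') (?F g)) \<longlongrightarrow> 0) (at g)"
    by (rule Lim_null_comparison[rotated])
  then show "isCont ?F g" unfolding isCont_def by (rule tendsto_dist_iff[THEN iffD2])
qed

lemma uniform_limit_quotient_inf:
  assumes unif: "uniform_limit UNIV l f sequentially"
    and bdd_l: "\<And>n. bdd_below (range (l n))" and bdd_f: "bdd_below (range f)"
  shows "uniform_limit (qspace H) (\<lambda>n. quotient_inf (l n) H) (quotient_inf f H) sequentially"
  unfolding uniform_limit_iff
proof (intro allI impI)
  fix e :: real assume "e > 0"
  then have "e / 2 > 0" by simp
  then have "\<forall>\<^sub>F n in sequentially. \<forall>g \<in> UNIV. dist (l n g) (f g) < e / 2"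
    using unif unfolding uniform_limit_iff by blast
  then show "\<forall>\<^sub>F n in sequentially. \<forall>C \<in> qspace H.
      dist (quotient_inf (l n) H C) (quotient_inf f H C) < e"
  proof eventually_elim
    case (elim n)
    show ?case
    proof
      fix C assume "C \<in> qspace H"
      then have "qcoset H -` {C} \<noteq> {}" unfolding qspace_def by auto
      moreover have "bdd_below (l n ` (qcoset H -` {C}))" "bdd_below (f ` (qcoset H -` {C}))"
        by (rule bdd_below_mono[OF bdd_l[of n]] bdd_below_mono[OF bdd_f], blast)+
      moreover have "dist (l n g) (f g) \<le> e / 2" for g using elim by (simp add: less_imp_le)
      ultimately have "dist (quotient_inf (l n) H C) (quotient_inf f H C) \<le> e / 2"
        unfolding quotient_inf_def by (rule dist_INF_le)
      then show "dist (quotient_inf (l n) H C) (quotient_inf f H C) < e"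
        using \<open>e > 0\<close> by linarith
    qed
  qed
qed

theorem mainTheorem17:
  fixes H :: "'a::{topological_group_add, t2_space} set"
    and l :: "nat \<Rightarrow> 'a \<Rightarrow> real"
    and lt :: "'a \<Rightarrow> real"
    and linf :: "'a set \<Rightarrow> real"
    and lK :: "nat \<Rightarrow> 'a set \<Rightarrow> real"
  assumes compact_G: "compact (UNIV :: 'a set)"
    and normal: "normal_subgroup H"
    and len: "\<And>n. length_fun (l n)"
    and cont: "\<And>n. continuous_on UNIV (l n)"
    and unif: "uniform_limit UNIV l lt sequentially"
    and lt_H: "\<And>g. g \<in> H \<Longrightarrow> lt g = 0"
    and lt_notH: "\<And>g. g \<notin> H \<Longrightarrow> lt g > 0"
    and linf_def: "\<And>g. linf (qcoset H g) = lt g"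
    and lK_def: "\<And>n g. lK n (qcoset H g) = Inf {l n g' | g'. qcoset H g' = qcoset H g}"
  shows "(\<forall>n. continuous_map (qtop H) euclideanreal (lK n)) \<and>
         uniform_limit (qspace H) lK linf sequentially"
proof
  have lK_eq: "lK n C = quotient_inf (l n) H C" if "C \<in> qspace H" for n C
    using that unfolding qspace_def by (auto simp: lK_def quotient_inf_qcoset)
  have lt_fibre: "lt g' = lt g" if "qcoset H g' = qcoset H g" for g g'
    using that linf_def by metis
  have linf_eq: "linf C = quotient_inf lt H C" if "C \<in> qspace H" for C
    using that quotient_inf_eq_if_constant[of H _ lt, OF lt_fibre] unfolding qspace_def
    by (auto simp: linf_def)
  have "lt g \<ge> 0" for g
    using lt_H[of g] lt_notH[of g] by (cases "g \<in> H") simp_all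
  then have "bdd_below (range lt)" by (rule bdd_belowI2)
  then have "uniform_limit (qspace H) (\<lambda>n. quotient_inf (l n) H) (quotient_inf lt H) sequentially"
    by (rule uniform_limit_quotient_inf[OF unif length_fun_bdd_below[OF len]])
  moreover have "uniform_limit (qspace H) lK linf sequentially \<longleftrightarrow>
      uniform_limit (qspace H) (\<lambda>n. quotient_inf (l n) H) (quotient_inf lt H) sequentially"
    by (rule uniform_limit_cong') (simp_all add: lK_eq linf_eq)
  ultimately show "uniform_limit (qspace H) lK linf sequentially" by simp
  show "\<forall>n. continuous_map (qtop H) euclideanreal (lK n)"
  proof
    fix n
    have "isCont (l n) 0" using cont[of n] by (simp add: continuous_on_eq_continuous_at)
    then have "continuous_map (qtop H) euclideanreal (quotient_inf (l n) H)"
      by (intro continuous_map_qtopI continuous_quotient_inf[OF len])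
    then show "continuous_map (qtop H) euclideanreal (lK n)"
      by (rule continuous_map_eq) (simp add: lK_eq topspace_qtop)
  qed
qed

end
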